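(* Let $X$ be a strong locally super-compact $L$-topological space. Then $({\rm pt}_L\mathcal O(X),{\rm sub}_{\mathcal O(X)})$ is an algebraic $L$-dcpo.
   Context: $L$ is a frame with implication $\to$. $L$-subsets: maps to $L$; nonempty: $\bigvee A=1$; ${\rm sub}_X(A,B)=\bigwedge_xA(x)\to B(x)$. $L$-topology: $\mathcal O(X)\subseteq L^X$ closed under finite meets and arbitrary joins containing all constants $a_X$. Base: $\mathcal B\subseteq\mathcal O(X)$ with $A=\bigvee_{B\in\mathcal B}{\rm sub}_X(B,A)\wedge B$ for each open $A$. Super-compact: nonempty $A$ with ${\rm sub}_X(A,\bigvee_iV_i)=\bigvee_i{\rm sub}_X(A,V_i)$ for all families of open $V_i$. Strong locally super-compact: has a base of super-compact open sets. A point of $\mathcal O(X)$: $p:\mathcal O(X)\to L$ with $p(A\wedge B)=p(A)\wedge p(B)$, $p(\bigvee_iA_i)=\bigvee_ip(A_i)$, $p(\lambda_X)=\lambda$; ${\rm pt}_L\mathcal O(X)$ the set of points, with ${\rm sub}_{\mathcal O(X)}(p,q)=\bigwedge_{A\in\mathcal O(X)}p(A)\to q(A)$. For an $L$-ordered set $(P,e)$: ${\downarrow}y(x)=e(x,y)$; $\sqcup A=x$ iff $e(x,y)={\rm sub}_P(A,{\downarrow}y)$ for all $y$; directed: nonempty with $D(x)\wedge D(y)\le\bigvee_zD(z)\wedge e(x,z)\wedge e(y,z)$; ideal: directed lower set; $L$-dcpo: all directed $L$-subsets have suprema; ${\Downarrow}x(y)=\bigwedge\{e(x,\sqcup I)\to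 I(y):I\text{ ideal with a supremum}\}$; compact: ${\Downarrow}x(x)=1$; $K(P)$ compact elements; $k(x)(y)=e(y,x)$ for $y\in K(P)$, $0$ otherwise; algebraic $L$-dcpo: $L$-dcpo with each $k(x)$ directed and $\sqcup k(x)=x$. *)

theory Defs
  imports Main
begin

definition frame :: "'l::complete_lattice itself \<Rightarrow> bool" where
  "frame _ \<longleftrightarrow> (\<forall>(a::'l) B. inf a (Sup B) = (SUP b\<in>B. inf a b))"

definition himp :: "'l::complete_lattice \<Rightarrow> 'l \<Rightarrow> 'l" where
  "himp a b = Sup {c. inf c a \<le> b}"

definition subL :: "('x \<Rightarrow> 'l::complete_lattice) \<Rightarrow> ('x \<Rightarrow> 'l) \<Rightarrow> 'l" where
  "subL A B = (INF x. himp (A x) (B x))"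

definition nonemptyL :: "('x \<Rightarrow> 'l::complete_lattice) \<Rightarrow> bool" where
  "nonemptyL A \<longleftrightarrow> (SUP x. A x) = top"

definition L_topology :: "('x \<Rightarrow> 'l::complete_lattice) set \<Rightarrow> bool" where
  "L_topology OX \<longleftrightarrow>
     (\<forall>A\<in>OX. \<forall>B\<in>OX. inf A B \<in> OX) \<and>
     (\<forall>S. S \<subseteq> OX \<longrightarrow> Sup S \<in> OX) \<and>
     (\<forall>a. (\<lambda>_. a) \<in> OX)"

definition is_base :: "('x \<Rightarrow> 'l::complete_lattice) set \<Rightarrow> ('x \<Rightarrow> 'l) set \<Rightarrow> bool" where
  "is_base OX Bs \<longleftrightarrow> Bs \<subseteq> OX \<and>
     (\<forall>A\<in>OX. \<forall>x. A x = (SUP B\<in>Bs. inf (subL B A) (B x)))"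

definition super_compact :: "('x \<Rightarrow> 'l::complete_lattice) set \<Rightarrow> ('x \<Rightarrow> 'l) \<Rightarrow> bool" where
  "super_compact OX A \<longleftrightarrow> nonemptyL A \<and>
     (\<forall>V. V \<subseteq> OX \<longrightarrow> subL A (Sup V) = (SUP W\<in>V. subL A W))"

definition strong_locally_super_compact :: "('x \<Rightarrow> 'l::complete_lattice) set \<Rightarrow> bool" where
  "strong_locally_super_compact OX \<longleftrightarrow>
     (\<exists>Bs. is_base OX Bs \<and> (\<forall>B\<in>Bs. super_compact OX B))"

text \<open>Points are maps OX(X) \<rightarrow> L; to obtain a set of HOL functions we take them
  extensional, i.e. equal to bot outside OX(X).\<close>

definition is_point :: "('x \<Rightarrow> 'l::complete_lattice) set \<Rightarrow> (('x \<Rightarrow> 'l) \<Rightarrow> 'l) \<Rightarrow> bool" where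
  "is_point OX p \<longleftrightarrow>
     (\<forall>A. A \<notin> OX \<longrightarrow> p A = bot) \<and>
     (\<forall>A\<in>OX. \<forall>B\<in>OX. p (inf A B) = inf (p A) (p B)) \<and>
     (\<forall>S. S \<subseteq> OX \<longrightarrow> p (Sup S) = (SUP A\<in>S. p A)) \<and>
     (\<forall>a. p (\<lambda>_. a) = a)"

definition ptL :: "('x \<Rightarrow> 'l::complete_lattice) set \<Rightarrow> (('x \<Rightarrow> 'l) \<Rightarrow> 'l) set" where
  "ptL OX = {p. is_point OX p}"

definition subO :: "('x \<Rightarrow> 'l::complete_lattice) set \<Rightarrow> (('x \<Rightarrow> 'l) \<Rightarrow> 'l) \<Rightarrow> (('x \<Rightarrow> 'l) \<Rightarrow> 'l) \<Rightarrow> 'l" where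
  "subO OX p q = (INF A\<in>OX. himp (p A) (q A))"

text \<open>L-subsets of P are maps 'p \<Rightarrow> L vanishing outside P.\<close>

definition Lsubset_of :: "'p set \<Rightarrow> ('p \<Rightarrow> 'l::complete_lattice) \<Rightarrow> bool" where
  "Lsubset_of P A \<longleftrightarrow> (\<forall>x. x \<notin> P \<longrightarrow> A x = bot)"

definition subP :: "'p set \<Rightarrow> ('p \<Rightarrow> 'l::complete_lattice) \<Rightarrow> ('p \<Rightarrow> 'l) \<Rightarrow> 'l" where
  "subP P A B = (INF x\<in>P. himp (A x) (B x))"

definition L_order :: "'p set \<Rightarrow> ('p \<Rightarrow> 'p \<Rightarrow> 'l::complete_lattice) \<Rightarrow> bool" where
  "L_order P e \<longleftrightarrow>
     (\<forall>x\<in>P. e x x = top) \<and>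
     (\<forall>x\<in>P. \<forall>y\<in>P. \<forall>z\<in>P. inf (e x y) (e y z) \<le> e x z) \<and>
     (\<forall>x\<in>P. \<forall>y\<in>P. e x y = top \<and> e y x = top \<longrightarrow> x = y)"

definition down :: "('p \<Rightarrow> 'p \<Rightarrow> 'l::complete_lattice) \<Rightarrow> 'p \<Rightarrow> 'p \<Rightarrow> 'l" where
  "down e y = (\<lambda>x. e x y)"

definition is_sup :: "'p set \<Rightarrow> ('p \<Rightarrow> 'p \<Rightarrow> 'l::complete_lattice) \<Rightarrow> ('p \<Rightarrow> 'l) \<Rightarrow> 'p \<Rightarrow> bool" where
  "is_sup P e A x \<longleftrightarrow> x \<in> P \<and> (\<forall>y\<in>P. e x y = subP P A (down e y))"

definition directed :: "'p set \<Rightarrow> ('p \<Rightarrow> 'p \<Rightarrow> 'l::complete_lattice) \<Rightarrow> ('p \<Rightarrow> 'l) \<Rightarrow> bool" where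
  "directed P e D \<longleftrightarrow> (SUP x\<in>P. D x) = top \<and>
     (\<forall>x\<in>P. \<forall>y\<in>P. inf (D x) (D y) \<le> (SUP z\<in>P. inf (D z) (inf (e x z) (e y z))))"

definition lower_set :: "'p set \<Rightarrow> ('p \<Rightarrow> 'p \<Rightarrow> 'l::complete_lattice) \<Rightarrow> ('p \<Rightarrow> 'l) \<Rightarrow> bool" where
  "lower_set P e A \<longleftrightarrow> (\<forall>x\<in>P. \<forall>y\<in>P. inf (A x) (e y x) \<le> A y)"

definition ideal :: "'p set \<Rightarrow> ('p \<Rightarrow> 'p \<Rightarrow> 'l::complete_lattice) \<Rightarrow> ('p \<Rightarrow> 'l) \<Rightarrow> bool" where
  "ideal P e I \<longleftrightarrow> directed P e I \<and> lower_set P e I"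

definition L_dcpo :: "'p set \<Rightarrow> ('p \<Rightarrow> 'p \<Rightarrow> 'l::complete_lattice) \<Rightarrow> bool" where
  "L_dcpo P e \<longleftrightarrow> L_order P e \<and>
     (\<forall>D. Lsubset_of P D \<and> directed P e D \<longrightarrow> (\<exists>x. is_sup P e D x))"

definition wbelow :: "'p set \<Rightarrow> ('p \<Rightarrow> 'p \<Rightarrow> 'l::complete_lattice) \<Rightarrow> 'p \<Rightarrow> 'p \<Rightarrow> 'l" where
  "wbelow P e x y = (INF (I, s)\<in>{(I, s). Lsubset_of P I \<and> ideal P e I \<and> is_sup P e I s}.
                       himp (e x s) (I y))"

definition compact_elems :: "'p set \<Rightarrow> ('p \<Rightarrow> 'p \<Rightarrow> 'l::complete_lattice) \<Rightarrow> 'p set" where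
  "compact_elems P e = {x\<in>P. wbelow P e x x = top}"

definition kset :: "'p set \<Rightarrow> ('p \<Rightarrow> 'p \<Rightarrow> 'l::complete_lattice) \<Rightarrow> 'p \<Rightarrow> 'p \<Rightarrow> 'l" where
  "kset P e x = (\<lambda>y. if y \<in> compact_elems P e then e y x else bot)"

definition algebraic_L_dcpo :: "'p set \<Rightarrow> ('p \<Rightarrow> 'p \<Rightarrow> 'l::complete_lattice) \<Rightarrow> bool" where
  "algebraic_L_dcpo P e \<longleftrightarrow> L_dcpo P e \<and>
     (\<forall>x\<in>P. directed P e (kset P e x) \<and> is_sup P e (kset P e x) x)"

end

theory Submission
  imports Defs
begin

text \<open>
  The points form an L-dcpo because the supremum of a directed L-subset D of points can be
  computed openwise, A \<mapsto> \<Or>_p D(p) \<and> p(A).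
  A super-compact basic open set B gives a point \<langle>B\<rangle> = sub(B, -) with sub(\<langle>B\<rangle>, q) = q(B);
  by this Yoneda-type identity \<langle>B\<rangle> is compact.
  For a point p, J_p(z) = \<Or>_B p(B) \<and> sub(z, \<langle>B\<rangle>) is an ideal with supremum p, so J_p(p) = 1
  when p is compact. Hence k(x) \<le> J_x, while J_x(z) \<le> \<Or>_B k(x)(\<langle>B\<rangle>) \<and> sub(z, \<langle>B\<rangle>);
  an L-subset squeezed in this way inherits directedness and the supremum x of J_x.
\<close>

lemma eq_iff_same_lower_bounds:
  fixes x y :: "'a::order"
  assumes "\<And>c. c \<le> x \<longleftrightarrow> c \<le> y"
  shows "x = y"
  using assms[of x] assms[of y] by (auto intro: antisym)

context
  assumes frame: "frame TYPE('l::complete_lattice)"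
begin

lemma frame_inf_SUP: "inf (a::'l) (SUP i\<in>I. f i) = (SUP i\<in>I. inf a (f i))"
  using frame unfolding frame_def by (simp add: image_image)

lemma frame_SUP_inf: "inf (SUP i\<in>I. f i) (a::'l) = (SUP i\<in>I. inf (f i) a)"
  using frame_inf_SUP by (simp add: inf_commute)

lemma le_himp_iff: "(c::'l) \<le> himp a b \<longleftrightarrow> inf c a \<le> b"
proof
  assume "c \<le> himp a b"
  hence "inf c a \<le> inf (himp a b) a" by (rule inf_mono) simp
  also have "\<dots> = (SUP d\<in>{d. inf d a \<le> b}. inf d a)"
    unfolding himp_def using frame_SUP_inf[of id "{d. inf d a \<le> b}" a] by simp
  also have "\<dots> \<le> b" by (auto intro: SUP_least)
  finally show "inf c a \<le> b" .
next
  assume "inf c a \<le> b"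
  thus "c \<le> himp a b" unfolding himp_def by (auto intro: Sup_upper)
qed

lemma le_subL_iff: "(c::'l) \<le> subL A B \<longleftrightarrow> (\<forall>x. inf c (A x) \<le> B x)"
  unfolding subL_def by (simp add: le_INF_iff le_himp_iff)

lemma le_subP_iff: "(c::'l) \<le> subP P A B \<longleftrightarrow> (\<forall>x\<in>P. inf c (A x) \<le> B x)"
  unfolding subP_def by (simp add: le_INF_iff le_himp_iff)

lemma le_subO_iff: "(c::'l) \<le> subO OX p q \<longleftrightarrow> (\<forall>A\<in>OX. inf c (p A) \<le> q A)"
  unfolding subO_def by (simp add: le_INF_iff le_himp_iff)

lemma subL_self: "subL A A = (top::'l)"
  by (rule top_le) (simp add: le_subL_iff)

lemma subL_top_right: "subL A (\<lambda>_. top) = (top::'l)"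
  by (rule top_le) (simp add: le_subL_iff)

lemma subL_inf_right: "subL A (inf B C) = inf (subL A B) (subL A (C::'x \<Rightarrow> 'l))"
  by (rule eq_iff_same_lower_bounds) (auto simp: le_subL_iff)

lemma subL_const_right:
  assumes "nonemptyL A"
  shows "subL A (\<lambda>_. a) = (a::'l)"
proof (rule eq_iff_same_lower_bounds)
  fix c
  have "c \<le> subL A (\<lambda>_. a) \<longleftrightarrow> inf c (SUP x. A x) \<le> a"
    by (simp add: le_subL_iff frame_inf_SUP SUP_le_iff)
  also have "\<dots> \<longleftrightarrow> c \<le> a" using assms unfolding nonemptyL_def by simp
  finally show "c \<le> subL A (\<lambda>_. a) \<longleftrightarrow> c \<le> a" .
qed

end

lemma is_sup_unique:
  assumes "L_order P e" and s: "is_sup P e D s" and t: "is_sup P e D t"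
  shows "s = t"
proof -
  have "s \<in> P" "t \<in> P" using s t unfolding is_sup_def by auto
  hence "e s t = e t t" "e t s = e s s" using s t unfolding is_sup_def by auto
  with \<open>s \<in> P\<close> \<open>t \<in> P\<close> \<open>L_order P e\<close> show ?thesis unfolding L_order_def by metis
qed

context
  assumes frame: "frame TYPE('l::complete_lattice)"
begin

lemma directed_generating:
  fixes e :: "'p \<Rightarrow> 'p \<Rightarrow> 'l"
  assumes "L_order P e"
    and K_le: "\<And>z. z \<in> P \<Longrightarrow> K z \<le> I z"
    and gen: "\<And>z. z \<in> P \<Longrightarrow> I z \<le> (SUP w\<in>P. inf (K w) (e z w))"
    and "directed P e I"
  shows "directed P e K"
  unfolding directed_def
proof (intro conjI ballI)
  have "top = (SUP z\<in>P. I z)" using \<open>directed P e I\<close> unfolding directed_def by simp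
  also have "\<dots> \<le> (SUP z\<in>P. SUP w\<in>P. inf (K w) (e z w))" using gen by (blast intro: SUP_mono)
  also have "\<dots> \<le> (SUP w\<in>P. K w)" by (auto intro!: SUP_least intro: SUP_upper2)
  finally show "(SUP w\<in>P. K w) = top" by (simp add: top_unique)
next
  fix x y assume x: "x \<in> P" and y: "y \<in> P"
  have "inf (K x) (K y) \<le> (SUP v\<in>P. inf (I v) (inf (e x v) (e y v)))"
    using \<open>directed P e I\<close> K_le x y unfolding directed_def by (blast intro: inf_mono order_trans)
  also have "\<dots> \<le> (SUP v\<in>P. SUP w\<in>P. inf (inf (K w) (e v w)) (inf (e x v) (e y v)))"
    using gen by (auto simp flip: frame_SUP_inf[OF frame] intro!: SUP_mono inf_mono)
  also have "\<dots> \<le> (SUP w\<in>P. inf (K w) (inf (e x w) (e y w)))"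
  proof (intro SUP_least)
    fix v w assume v: "v \<in> P" and w: "w \<in> P"
    have "inf (e x v) (e v w) \<le> e x w" "inf (e y v) (e v w) \<le> e y w"
      using \<open>L_order P e\<close> x y v w unfolding L_order_def by auto
    hence "inf (K w) (inf (inf (e x v) (e v w)) (inf (e y v) (e v w)))
        \<le> inf (K w) (inf (e x w) (e y w))"
      by (intro inf_mono) auto
    hence "inf (inf (K w) (e v w)) (inf (e x v) (e y v)) \<le> inf (K w) (inf (e x w) (e y w))"
      by (simp add: inf_aci)
    thus "inf (inf (K w) (e v w)) (inf (e x v) (e y v))
        \<le> (SUP w\<in>P. inf (K w) (inf (e x w) (e y w)))"
      by (rule SUP_upper2[OF w])
  qed
  finally show "inf (K x) (K y) \<le> (SUP w\<in>P. inf (K w) (inf (e x w) (e y w)))" .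
qed

lemma is_sup_generating:
  fixes e :: "'p \<Rightarrow> 'p \<Rightarrow> 'l"
  assumes "L_order P e"
    and K_le: "\<And>z. z \<in> P \<Longrightarrow> K z \<le> I z"
    and gen: "\<And>z. z \<in> P \<Longrightarrow> I z \<le> (SUP w\<in>P. inf (K w) (e z w))"
    and "is_sup P e I x"
  shows "is_sup P e K x"
  unfolding is_sup_def
proof (intro conjI ballI)
  show "x \<in> P" using \<open>is_sup P e I x\<close> unfolding is_sup_def by simp
next
  fix y assume y: "y \<in> P"
  have "subP P K (down e y) = subP P I (down e y)"
  proof (rule eq_iff_same_lower_bounds)
    fix c
    have "inf c (I z) \<le> e z y" if c: "\<forall>w\<in>P. inf c (K w) \<le> e w y" and z: "z \<in> P" for z
    proof -
      have "inf c (I z) \<le> inf c (SUP w\<in>P. inf (K w) (e z w))"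
        using gen z by (simp add: le_infI2)
      also have "\<dots> = (SUP w\<in>P. inf (inf c (K w)) (e z w))"
        by (simp add: frame_inf_SUP[OF frame] inf_assoc)
      also have "\<dots> \<le> (SUP w\<in>P. inf (e w y) (e z w))" using c by (auto intro!: SUP_mono inf_mono)
      also have "\<dots> \<le> e z y"
        using \<open>L_order P e\<close> y z unfolding L_order_def by (auto intro!: SUP_least simp: inf_commute)
      finally show ?thesis .
    qed
    moreover have "inf c (K z) \<le> inf c (I z)" if "z \<in> P" for z
      using K_le that by (simp add: inf.coboundedI2)
    ultimately show "c \<le> subP P K (down e y) \<longleftrightarrow> c \<le> subP P I (down e y)"
      unfolding le_subP_iff[OF frame] down_def by (meson order_trans)
  qed
  thus "e x y = subP P K (down e y)" using \<open>is_sup P e I x\<close> y unfolding is_sup_def by simp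
qed

end

section \<open>The L-dcpo of points\<close>

locale L_topological_space =
  fixes OX :: "('x \<Rightarrow> 'l::complete_lattice) set"
  assumes frame: "frame TYPE('l)" and L_topology: "L_topology OX"
begin

lemmas inf_SUP = frame_inf_SUP[OF frame]
  and SUP_inf = frame_SUP_inf[OF frame]
  and le_subL_iff = le_subL_iff[OF frame]
  and le_subP_iff = le_subP_iff[OF frame]
  and le_subO_iff = le_subO_iff[OF frame]
  and le_himp_iff = le_himp_iff[OF frame]
  and subL_self = subL_self[OF frame]
  and subL_top_right = subL_top_right[OF frame]
  and subL_inf_right = subL_inf_right[OF frame]
  and subL_const_right = subL_const_right[OF frame]

lemma open_const: "(\<lambda>_. a) \<in> OX"
  using L_topology unfolding L_topology_def by blast

lemma open_inf: "A \<in> OX \<Longrightarrow> B \<in> OX \<Longrightarrow> inf A B \<in> OX"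
  using L_topology unfolding L_topology_def by blast

lemma open_Sup: "S \<subseteq> OX \<Longrightarrow> Sup S \<in> OX"
  using L_topology unfolding L_topology_def by blast

lemma open_inf_const: "B \<in> OX \<Longrightarrow> (\<lambda>x. inf c (B x)) \<in> OX"
  using open_inf[OF open_const] by (simp add: inf_fun_def)

lemma point_inf: "is_point OX p \<Longrightarrow> A \<in> OX \<Longrightarrow> B \<in> OX \<Longrightarrow> p (inf A B) = inf (p A) (p B)"
  unfolding is_point_def by blast

lemma point_Sup: "is_point OX p \<Longrightarrow> S \<subseteq> OX \<Longrightarrow> p (Sup S) = (SUP A\<in>S. p A)"
  unfolding is_point_def by blast

lemma point_const: "is_point OX p \<Longrightarrow> p (\<lambda>_. a) = a"
  unfolding is_point_def by blast

lemma point_not_open: "is_point OX p \<Longrightarrow> A \<notin> OX \<Longrightarrow> p A = bot"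
  unfolding is_point_def by blast

lemma point_mono:
  assumes p: "is_point OX p" and "A \<in> OX" "B \<in> OX" "A \<le> B"
  shows "p A \<le> p B"
proof -
  have "p B = p (Sup {A, B})" using \<open>A \<le> B\<close> by (simp add: sup_absorb2)
  also have "\<dots> = sup (p A) (p B)" using point_Sup[OF p, of "{A, B}"] assms by simp
  finally show ?thesis by (simp add: le_iff_sup)
qed

lemma point_inf_const:
  "is_point OX p \<Longrightarrow> B \<in> OX \<Longrightarrow> p (\<lambda>x. inf c (B x)) = inf c (p B)"
  using point_inf[OF _ open_const, of p B c] point_const[of p c] by (simp add: inf_fun_def)

lemma point_subL_le:
  assumes p: "is_point OX p" and A: "A \<in> OX" and B: "B \<in> OX"
  shows "inf (subL B A) (p B) \<le> p A"
proof -
  have "(\<lambda>x. inf (subL B A) (B x)) \<le> A" by (simp add: le_fun_def le_subL_iff[symmetric])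
  from point_mono[OF p open_inf_const[OF B] A this] show ?thesis
    by (simp add: point_inf_const[OF p B])
qed

lemma subO_mp: "A \<in> OX \<Longrightarrow> inf (subO OX p q) (p A) \<le> q A"
  using le_subO_iff[where c = "subO OX p q" and OX = OX and p = p and q = q] by simp

lemma subO_self: "subO OX p p = top"
  by (rule top_le) (simp add: le_subO_iff)

lemma subO_trans: "inf (subO OX p q) (subO OX q r) \<le> subO OX p r"
  unfolding le_subO_iff
proof
  fix A assume A: "A \<in> OX"
  have "inf (inf (subO OX p q) (subO OX q r)) (p A) = inf (subO OX q r) (inf (subO OX p q) (p A))"
    by (simp add: inf_aci)
  also have "\<dots> \<le> inf (subO OX q r) (q A)" using subO_mp[OF A] by (rule inf_mono[OF order_refl])
  also have "\<dots> \<le> r A" using subO_mp[OF A] .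
  finally show "inf (inf (subO OX p q) (subO OX q r)) (p A) \<le> r A" .
qed

lemma subO_antisym:
  assumes p: "is_point OX p" and q: "is_point OX q"
    and "subO OX p q = top" and "subO OX q p = top"
  shows "p = q"
proof
  fix A show "p A = q A"
  proof (cases "A \<in> OX")
    case True
    then show ?thesis using assms(3,4) subO_mp[OF True, of p q] subO_mp[OF True, of q p]
      by (simp add: antisym)
  next
    case False
    then show ?thesis using point_not_open[OF p] point_not_open[OF q] by simp
  qed
qed

lemma L_order_points: "L_order (ptL OX) (subO OX)"
  unfolding L_order_def ptL_def using subO_self subO_trans subO_antisym by auto

definition sup_point :: "((('x \<Rightarrow> 'l) \<Rightarrow> 'l) \<Rightarrow> 'l) \<Rightarrow> ('x \<Rightarrow> 'l) \<Rightarrow> 'l" where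
  "sup_point D A = (if A \<in> OX then (SUP p\<in>ptL OX. inf (D p) (p A)) else bot)"

lemma sup_point_inf_le:
  assumes D: "directed (ptL OX) (subO OX) D" and A: "A \<in> OX" and B: "B \<in> OX"
  shows "inf (sup_point D A) (sup_point D B) \<le> sup_point D (inf A B)"
proof -
  have "inf (sup_point D A) (sup_point D B) =
      (SUP p\<in>ptL OX. SUP q\<in>ptL OX. inf (inf (D p) (p A)) (inf (D q) (q B)))"
    using A B by (simp add: sup_point_def inf_SUP SUP_inf) (rule SUP_commute)
  also have "\<dots> \<le> (SUP z\<in>ptL OX. inf (D z) (inf (z A) (z B)))"
  proof (intro SUP_least)
    fix p q assume p: "p \<in> ptL OX" and q: "q \<in> ptL OX"
    have "inf (inf (D p) (p A)) (inf (D q) (q B)) = inf (inf (D p) (D q)) (inf (p A) (q B))"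
      by (simp add: inf_aci)
    also have "\<dots> \<le>
        inf (SUP z\<in>ptL OX. inf (D z) (inf (subO OX p z) (subO OX q z))) (inf (p A) (q B))"
      using D p q unfolding directed_def by (intro inf_mono) auto
    also have "\<dots> =
        (SUP z\<in>ptL OX. inf (D z) (inf (inf (subO OX p z) (p A)) (inf (subO OX q z) (q B))))"
      by (simp only: SUP_inf) (simp add: inf_aci)
    also have "\<dots> \<le> (SUP z\<in>ptL OX. inf (D z) (inf (z A) (z B)))"
      using subO_mp[OF A] subO_mp[OF B] by (intro SUP_subset_mono order_refl inf_mono) auto
    finally show "inf (inf (D p) (p A)) (inf (D q) (q B))
        \<le> (SUP z\<in>ptL OX. inf (D z) (inf (z A) (z B)))" .
  qed
  also have "\<dots> = sup_point D (inf A B)"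
    using A B by (simp add: sup_point_def open_inf ptL_def point_inf)
  finally show ?thesis .
qed

lemma sup_point_is_point:
  assumes D: "directed (ptL OX) (subO OX) D"
  shows "is_point OX (sup_point D)"
  unfolding is_point_def
proof (intro conjI allI ballI impI)
  fix A assume "A \<notin> OX"
  thus "sup_point D A = bot" by (simp add: sup_point_def)
next
  fix A B assume A: "A \<in> OX" and B: "B \<in> OX"
  show "sup_point D (inf A B) = inf (sup_point D A) (sup_point D B)"
  proof (rule antisym)
    show "sup_point D (inf A B) \<le> inf (sup_point D A) (sup_point D B)"
      using A B by (auto simp: sup_point_def open_inf ptL_def point_inf
          intro!: SUP_subset_mono inf_mono)
  qed (rule sup_point_inf_le[OF D A B])
next
  fix S :: "('x \<Rightarrow> 'l) set" assume S: "S \<subseteq> OX"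
  have "sup_point D (Sup S) = (SUP p\<in>ptL OX. SUP A\<in>S. inf (D p) (p A))"
    using S by (simp add: sup_point_def open_Sup ptL_def point_Sup inf_SUP del: Sup_apply)
  also have "\<dots> = (SUP A\<in>S. SUP p\<in>ptL OX. inf (D p) (p A))" by (rule SUP_commute)
  also have "\<dots> = (SUP A\<in>S. sup_point D A)" using S by (intro SUP_cong) (auto simp: sup_point_def)
  finally show "sup_point D (Sup S) = (SUP A\<in>S. sup_point D A)" .
next
  fix a :: 'l
  have "sup_point D (\<lambda>_. a) = inf (SUP p\<in>ptL OX. D p) a"
    by (simp add: sup_point_def open_const ptL_def point_const SUP_inf)
  also have "\<dots> = a" using D unfolding directed_def by simp
  finally show "sup_point D (\<lambda>_. a) = a" .
qed

lemma is_sup_sup_point: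
  assumes D: "directed (ptL OX) (subO OX) D"
  shows "is_sup (ptL OX) (subO OX) D (sup_point D)"
  unfolding is_sup_def
proof (intro conjI ballI)
  show "sup_point D \<in> ptL OX" using sup_point_is_point[OF D] by (simp add: ptL_def)
next
  fix y
  show "subO OX (sup_point D) y = subP (ptL OX) D (down (subO OX) y)"
  proof (rule eq_iff_same_lower_bounds)
    fix c :: 'l
    have "c \<le> subO OX (sup_point D) y \<longleftrightarrow>
        (\<forall>A\<in>OX. \<forall>p\<in>ptL OX. inf (inf c (D p)) (p A) \<le> y A)"
      by (simp add: le_subO_iff sup_point_def inf_SUP SUP_le_iff inf_assoc)
    also have "\<dots> \<longleftrightarrow> c \<le> subP (ptL OX) D (down (subO OX) y)"
      by (auto simp: le_subP_iff down_def le_subO_iff)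
    finally show "c \<le> subO OX (sup_point D) y \<longleftrightarrow> c \<le> subP (ptL OX) D (down (subO OX) y)" .
  qed
qed

lemma L_dcpo_points: "L_dcpo (ptL OX) (subO OX)"
  unfolding L_dcpo_def using L_order_points is_sup_sup_point by blast

end

section \<open>Points of a base of super-compact open sets\<close>

locale super_compact_base = L_topological_space OX for OX :: "('x \<Rightarrow> 'l::complete_lattice) set" +
  fixes Bs :: "('x \<Rightarrow> 'l) set"
  assumes is_base: "is_base OX Bs" and base_super_compact: "\<forall>B\<in>Bs. super_compact OX B"
begin

lemma base_open: "B \<in> Bs \<Longrightarrow> B \<in> OX"
  using is_base unfolding is_base_def by blast

lemma point_base_expansion:
  assumes p: "is_point OX p" and A: "A \<in> OX"
  shows "p A = (SUP B\<in>Bs. inf (subL B A) (p B))"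
proof -
  let ?S = "(\<lambda>B x. inf (subL B A) (B x)) ` Bs"
  have "A = Sup ?S" using is_base A unfolding is_base_def by (auto simp: image_image)
  moreover have "?S \<subseteq> OX" using base_open open_inf_const by auto
  ultimately have "p A = (SUP B\<in>Bs. p (\<lambda>x. inf (subL B A) (B x)))"
    using point_Sup[OF p, of ?S] by (simp add: image_image del: Sup_apply)
  also have "\<dots> = (SUP B\<in>Bs. inf (subL B A) (p B))"
    using point_inf_const[OF p] base_open by simp
  finally show ?thesis .
qed

lemma SUP_point_base: "is_point OX p \<Longrightarrow> (SUP B\<in>Bs. p B) = top"
  using point_base_expansion[of p "\<lambda>_. top"] by (simp add: open_const point_const subL_top_right)

definition base_point :: "('x \<Rightarrow> 'l) \<Rightarrow> ('x \<Rightarrow> 'l) \<Rightarrow> 'l" where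
  "base_point B A = (if A \<in> OX then subL B A else bot)"

lemma base_point_is_point:
  assumes B: "B \<in> Bs"
  shows "is_point OX (base_point B)"
  unfolding is_point_def
proof (intro conjI allI ballI impI)
  fix A assume "A \<notin> OX"
  thus "base_point B A = bot" by (simp add: base_point_def)
next
  fix A C assume "A \<in> OX" "C \<in> OX"
  thus "base_point B (inf A C) = inf (base_point B A) (base_point B C)"
    by (simp add: base_point_def open_inf subL_inf_right)
next
  fix S assume S: "S \<subseteq> OX"
  have "subL B (Sup S) = (SUP A\<in>S. subL B A)"
    using base_super_compact B S unfolding super_compact_def by blast
  thus "base_point B (Sup S) = (SUP A\<in>S. base_point B A)"
    using S by (auto simp: base_point_def open_Sup subset_iff intro!: SUP_cong)
next
  fix a
  show "base_point B (\<lambda>_. a) = a"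
    using base_super_compact B
    by (simp add: base_point_def open_const subL_const_right super_compact_def)
qed

lemma base_point_in_points: "B \<in> Bs \<Longrightarrow> base_point B \<in> ptL OX"
  using base_point_is_point by (simp add: ptL_def)

lemma subO_base_point:
  assumes B: "B \<in> Bs" and q: "is_point OX q"
  shows "subO OX (base_point B) q = q B"
proof (rule antisym)
  show "subO OX (base_point B) q \<le> q B"
    using subO_mp[OF base_open[OF B], of "base_point B" q] base_open[OF B]
    by (simp add: base_point_def subL_self)
  show "q B \<le> subO OX (base_point B) q"
    using point_subL_le[OF q _ base_open[OF B]]
    by (simp add: le_subO_iff base_point_def inf_commute)
qed

lemma subO_base_points: "B \<in> Bs \<Longrightarrow> C \<in> Bs \<Longrightarrow> subO OX (base_point B) (base_point C) = subL C B"
  using subO_base_point[OF _ base_point_is_point] base_open by (simp add: base_point_def)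

lemma base_point_compact:
  assumes B: "B \<in> Bs"
  shows "base_point B \<in> compact_elems (ptL OX) (subO OX)"
  unfolding compact_elems_def wbelow_def
proof (intro CollectI conjI top_le INF_greatest base_point_in_points[OF B], clarify)
  fix I s assume I: "ideal (ptL OX) (subO OX) I" and s: "is_sup (ptL OX) (subO OX) I s"
  have "s = sup_point I"
    using is_sup_unique[OF L_order_points s is_sup_sup_point] I unfolding ideal_def by blast
  moreover have "is_point OX s" using s unfolding is_sup_def ptL_def by simp
  ultimately have "subO OX (base_point B) s = (SUP p\<in>ptL OX. inf (I p) (p B))"
    using subO_base_point[OF B] base_open[OF B] by (simp add: sup_point_def)
  also have "\<dots> \<le> I (base_point B)"
  proof (rule SUP_least)
    fix p assume p: "p \<in> ptL OX"
    have "inf (I p) (subO OX (base_point B) p) \<le> I (base_point B)"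
      using I p base_point_in_points[OF B] unfolding ideal_def lower_set_def by blast
    thus "inf (I p) (p B) \<le> I (base_point B)" using subO_base_point[OF B] p by (simp add: ptL_def)
  qed
  finally show "top \<le> himp (subO OX (base_point B) s) (I (base_point B))"
    by (simp add: le_himp_iff)
qed

definition basic_ideal :: "(('x \<Rightarrow> 'l) \<Rightarrow> 'l) \<Rightarrow> (('x \<Rightarrow> 'l) \<Rightarrow> 'l) \<Rightarrow> 'l" where
  "basic_ideal p z =
    (if z \<in> ptL OX then (SUP B\<in>Bs. inf (p B) (subO OX z (base_point B))) else bot)"

lemma le_basic_ideal_base_point: "B \<in> Bs \<Longrightarrow> p B \<le> basic_ideal p (base_point B)"
  unfolding basic_ideal_def by (auto simp: base_point_in_points subO_self intro: SUP_upper2)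

lemma inf_basic_ideal_le:
  assumes p: "is_point OX p" and y: "y \<in> ptL OX" and z: "z \<in> ptL OX"
  shows "inf (basic_ideal p y) (basic_ideal p z)
    \<le> (SUP D\<in>Bs. inf (p D) (inf (subO OX y (base_point D)) (subO OX z (base_point D))))"
    (is "_ \<le> ?R")
proof -
  have "inf (basic_ideal p y) (basic_ideal p z) = (SUP B\<in>Bs. SUP C\<in>Bs.
      inf (inf (p B) (subO OX y (base_point B))) (inf (p C) (subO OX z (base_point C))))"
    using y z by (simp add: basic_ideal_def inf_SUP SUP_inf) (rule SUP_commute)
  also have "\<dots> \<le> ?R"
  proof (intro SUP_least)
    fix B C assume B: "B \<in> Bs" and C: "C \<in> Bs"
    have expand: "inf (p B) (p C) = (SUP D\<in>Bs. inf (inf (subL D B) (subL D C)) (p D))"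
      using point_base_expansion[OF p open_inf[OF base_open[OF B] base_open[OF C]]]
        point_inf[OF p base_open[OF B] base_open[OF C]]
      by (simp add: subL_inf_right)
    have "inf (inf (p B) (subO OX y (base_point B))) (inf (p C) (subO OX z (base_point C))) =
        inf (inf (p B) (p C)) (inf (subO OX y (base_point B)) (subO OX z (base_point C)))"
      by (simp add: inf_aci)
    also have "\<dots> =
        (SUP D\<in>Bs. inf (p D) (inf (inf (subO OX y (base_point B)) (subL D B))
          (inf (subO OX z (base_point C)) (subL D C))))"
      unfolding expand by (simp only: SUP_inf) (simp add: inf_aci)
    also have "\<dots> \<le> ?R"
    proof (intro SUP_subset_mono order_refl inf_mono)
      fix D assume D: "D \<in> Bs"
      show "inf (subO OX y (base_point B)) (subL D B) \<le> subO OX y (base_point D)"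
        using subO_trans[of y "base_point B" "base_point D"] subO_base_points[OF B D] by simp
      show "inf (subO OX z (base_point C)) (subL D C) \<le> subO OX z (base_point D)"
        using subO_trans[of z "base_point C" "base_point D"] subO_base_points[OF C D] by simp
    qed
    finally show "inf (inf (p B) (subO OX y (base_point B))) (inf (p C) (subO OX z (base_point C)))
      \<le> ?R" .
  qed
  finally show ?thesis .
qed

lemma basic_ideal_directed:
  assumes p: "is_point OX p"
  shows "directed (ptL OX) (subO OX) (basic_ideal p)"
  unfolding directed_def
proof (intro conjI ballI)
  have "top = (SUP B\<in>Bs. p B)" using SUP_point_base[OF p] by simp
  also have "\<dots> \<le> (SUP z\<in>ptL OX. basic_ideal p z)"
    using le_basic_ideal_base_point base_point_in_points by (blast intro: SUP_mono)
  finally show "(SUP z\<in>ptL OX. basic_ideal p z) = top" by (simp add: top_unique)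
next
  fix y z assume y: "y \<in> ptL OX" and z: "z \<in> ptL OX"
  have "inf (basic_ideal p y) (basic_ideal p z)
    \<le> (SUP D\<in>Bs. inf (p D) (inf (subO OX y (base_point D)) (subO OX z (base_point D))))"
    by (rule inf_basic_ideal_le[OF p y z])
  also have "\<dots> \<le> (SUP v\<in>ptL OX. inf (basic_ideal p v) (inf (subO OX y v) (subO OX z v)))"
    using le_basic_ideal_base_point base_point_in_points by (blast intro: SUP_mono inf_mono)
  finally show "inf (basic_ideal p y) (basic_ideal p z)
    \<le> (SUP v\<in>ptL OX. inf (basic_ideal p v) (inf (subO OX y v) (subO OX z v)))" .
qed

lemma basic_ideal_lower_set: "lower_set (ptL OX) (subO OX) (basic_ideal p)"
  unfolding lower_set_def
proof (intro ballI)
  fix x y assume x: "x \<in> ptL OX" and y: "y \<in> ptL OX"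
  have "inf (basic_ideal p x) (subO OX y x)
      = (SUP B\<in>Bs. inf (p B) (inf (subO OX y x) (subO OX x (base_point B))))"
    using x by (simp add: basic_ideal_def SUP_inf) (simp add: inf_aci)
  also have "\<dots> \<le> basic_ideal p y"
    using y subO_trans by (auto simp: basic_ideal_def intro!: SUP_subset_mono inf_mono)
  finally show "inf (basic_ideal p x) (subO OX y x) \<le> basic_ideal p y" .
qed

lemma sup_point_basic_ideal:
  assumes p: "is_point OX p"
  shows "sup_point (basic_ideal p) = p"
proof
  fix A show "sup_point (basic_ideal p) A = p A"
  proof (cases "A \<in> OX")
    case False
    thus ?thesis using point_not_open[OF p] by (simp add: sup_point_def)
  next
    case A: True
    have "sup_point (basic_ideal p) A
        = (SUP z\<in>ptL OX. SUP B\<in>Bs. inf (p B) (inf (subO OX z (base_point B)) (z A)))"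
      using A by (simp add: sup_point_def basic_ideal_def SUP_inf inf_assoc)
    also have "\<dots> \<le> (SUP B\<in>Bs. inf (p B) (subL B A))"
    proof (intro SUP_least)
      fix z B assume B: "B \<in> Bs"
      have "inf (subO OX z (base_point B)) (z A) \<le> subL B A"
        using subO_mp[OF A, of z "base_point B"] A by (simp add: base_point_def)
      thus "inf (p B) (inf (subO OX z (base_point B)) (z A)) \<le> (SUP B\<in>Bs. inf (p B) (subL B A))"
        by (intro SUP_upper2[OF B] inf_mono order_refl)
    qed
    also have "\<dots> \<le> p A"
      using point_subL_le[OF p A base_open] by (auto simp: inf_commute intro: SUP_least)
    finally have "sup_point (basic_ideal p) A \<le> p A" .
    moreover have "p A \<le> sup_point (basic_ideal p) A"
    proof -
      have "p A = (SUP B\<in>Bs. inf (p B) (base_point B A))"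
        using point_base_expansion[OF p A] A by (simp add: base_point_def inf_commute)
      also have "\<dots> \<le> (SUP z\<in>ptL OX. inf (basic_ideal p z) (z A))"
        using le_basic_ideal_base_point base_point_in_points by (blast intro: SUP_mono inf_mono)
      finally show ?thesis using A by (simp add: sup_point_def)
    qed
    ultimately show ?thesis by (rule antisym)
  qed
qed

lemma is_sup_basic_ideal: "is_point OX p \<Longrightarrow> is_sup (ptL OX) (subO OX) (basic_ideal p) p"
  using is_sup_sup_point[OF basic_ideal_directed] sup_point_basic_ideal by metis

lemma compact_basic_ideal_self:
  assumes p: "p \<in> compact_elems (ptL OX) (subO OX)"
  shows "basic_ideal p p = top"
proof -
  have "is_point OX p" using p unfolding compact_elems_def ptL_def by simp
  hence "ideal (ptL OX) (subO OX) (basic_ideal p)" and "is_sup (ptL OX) (subO OX) (basic_ideal p) p"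
    using basic_ideal_directed basic_ideal_lower_set is_sup_basic_ideal by (auto simp: ideal_def)
  moreover have "Lsubset_of (ptL OX) (basic_ideal p)" by (simp add: Lsubset_of_def basic_ideal_def)
  ultimately have "wbelow (ptL OX) (subO OX) p p \<le> himp (subO OX p p) (basic_ideal p p)"
    unfolding wbelow_def by (auto intro: INF_lower2)
  with p show ?thesis
    by (simp add: compact_elems_def subO_self le_himp_iff top_unique)
qed

lemma basic_ideal_mono: "inf (subO OX p x) (basic_ideal p z) \<le> basic_ideal x z"
  using subO_mp[OF base_open]
  by (auto simp: basic_ideal_def inf_SUP inf_assoc[symmetric] intro!: SUP_subset_mono inf_mono)

lemma kset_le_basic_ideal: "kset (ptL OX) (subO OX) x z \<le> basic_ideal x z"
proof (cases "z \<in> compact_elems (ptL OX) (subO OX)")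
  case True
  thus ?thesis using basic_ideal_mono[of z x z] by (simp add: kset_def compact_basic_ideal_self)
qed (simp add: kset_def)

lemma basic_ideal_le_SUP_kset:
  assumes x: "is_point OX x"
  shows "basic_ideal x z \<le> (SUP w\<in>ptL OX. inf (kset (ptL OX) (subO OX) x w) (subO OX z w))"
  unfolding basic_ideal_def
proof (simp, intro impI SUP_least)
  fix B assume B: "B \<in> Bs"
  have "kset (ptL OX) (subO OX) x (base_point B) = x B"
    using base_point_compact[OF B] subO_base_point[OF B x] by (simp add: kset_def)
  thus "inf (x B) (subO OX z (base_point B))
      \<le> (SUP w\<in>ptL OX. inf (kset (ptL OX) (subO OX) x w) (subO OX z w))"
    by (intro SUP_upper2[OF base_point_in_points[OF B]]) simp
qed

lemma algebraic_points: "algebraic_L_dcpo (ptL OX) (subO OX)"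
  unfolding algebraic_L_dcpo_def
proof (intro conjI ballI L_dcpo_points)
  fix x assume "x \<in> ptL OX"
  hence x: "is_point OX x" by (simp add: ptL_def)
  note generating = L_order_points kset_le_basic_ideal basic_ideal_le_SUP_kset[OF x]
  show "directed (ptL OX) (subO OX) (kset (ptL OX) (subO OX) x)"
    by (rule directed_generating[OF frame generating basic_ideal_directed[OF x]])
  show "is_sup (ptL OX) (subO OX) (kset (ptL OX) (subO OX) x) x"
    by (rule is_sup_generating[OF frame generating is_sup_basic_ideal[OF x]])
qed

end

theorem theorem5p7:
  fixes OX :: "('x \<Rightarrow> 'l::complete_lattice) set"
  assumes "frame TYPE('l)"
    and "L_topology OX"
    and "strong_locally_super_compact OX"
  shows "algebraic_L_dcpo (ptL OX) (subO OX)"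
proof -
  obtain Bs where "is_base OX Bs" and "\<forall>B\<in>Bs. super_compact OX B"
    using assms(3) unfolding strong_locally_super_compact_def by blast
  then interpret super_compact_base OX Bs
    using assms(1,2) by unfold_locales
  show ?thesis by (rule algebraic_points)
qed

end
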